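(* For every integer $m\ge0$ and every $n\ge1$, $$v_n\!\left(1,m,\tfrac1q,q\right)=q^{\binom n2}\,\frac{[2m+n-1]\,[2m+n-2]\cdots[2m+1]}{[2m+2n-2]\,[2m+2n-4]\cdots[2m+2]},$$ where numerator and denominator each have $n-1$ factors (empty products equal $1$).
   Context: $q$ is an indeterminate; $[n]=\frac{1-q^n}{1-q}$, $[n]!=[1]\cdots[n]$, $[0]!=1$, $(a;q)_n=(1-a)(1-qa)\cdots(1-q^{n-1}a)$, $(a;q)_0=1$. For an integer $m\ge 0$ and indeterminates $x,s$, $$v_n(x,m,s,q)=\sum_{k=0}^{\lfloor n/2\rfloor}(-s)^kq^{k^2}\frac{[n]!}{[k]!\,[n-2k]!}\,\frac{[m+n-k-1]!}{[m+n-1]!}\,\frac{1}{(-q;q)_k\,(-q^{n+m-k};q)_k}\,x^{n-2k}\quad(n\ge1),\qquad v_0=1.$$ *)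

theory Defs
  imports "HOL-Computational_Algebra.Computational_Algebra"
begin

definition qvar :: "rat poly fract" where
  "qvar = Fract [:0, 1:] 1"

definition qint :: "'a::field \<Rightarrow> nat \<Rightarrow> 'a" where
  "qint q n = (1 - q ^ n) / (1 - q)"

definition qfact :: "'a::field \<Rightarrow> nat \<Rightarrow> 'a" where
  "qfact q n = (\<Prod>i = 1..n. qint q i)"

definition qpoch :: "'a::field \<Rightarrow> 'a \<Rightarrow> nat \<Rightarrow> 'a" where
  "qpoch a q n = (\<Prod>i = 0..<n. 1 - q ^ i * a)"

definition vpoly :: "nat \<Rightarrow> 'a::field \<Rightarrow> nat \<Rightarrow> 'a \<Rightarrow> 'a \<Rightarrow> 'a" where
  "vpoly n x m s q =
     (if n = 0 then 1 else
      (\<Sum>k = 0..n div 2.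
         (- s) ^ k * q ^ (k ^ 2)
         * (qfact q n / (qfact q k * qfact q (n - 2 * k)))
         * (qfact q (m + n - k - 1) / qfact q (m + n - 1))
         * (1 / (qpoch (- q) q k * qpoch (- (q ^ (n + m - k))) q k))
         * x ^ (n - 2 * k)))"

end

theory Submission
  imports Defs
begin

(* Put x = 1 and s = 1/q, and let T(n,k) be the k-th summand of v_n(1,m,1/q,q),
   extended by 0 for 2k > n, so that v_n = S(n) = sum_{k<=n} T(n,k).  The right-hand side
   R(n) satisfies R(1) = 1 and R(n+1) = rho_n R(n) with rho_n = q^n [2m+n] / [2m+2n]; hence it
   suffices to show S(1) = 1 and S(n+1) = rho_n S(n).  The recurrence is proved in
   Wilf-Zeilberger style: with the certificate G(n,k) = -[2k]/[n+1] T(n+1,k) one has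
     T(n+1,k) - rho_n T(n,k) = G(n,k+1) - G(n,k),
   and summing over k telescopes to G(n,n+2) - G(n,0) = 0.  The certificate identity follows
   from the two hypergeometric ratios T(n,k+1)/T(n,k) and T(n+1,k)/T(n,k), which reduce it to
   a polynomial identity between q-integers. *)

lemma qint_0 [simp]: "qint q 0 = 0"
  unfolding qint_def by simp

lemma qint_double: "qint q (2 * j) = qint q j * (1 + q ^ j)"
  unfolding qint_def by (simp add: power_mult mult.commute[of 2] power2_eq_square field_simps)

lemma qfact_0 [simp]: "qfact q 0 = 1"
  unfolding qfact_def by simp

lemma qfact_Suc: "qfact q (Suc n) = qfact q n * qint q (Suc n)"
  unfolding qfact_def by (simp add: prod.nat_ivl_Suc' mult.commute)

lemma qpoch_Suc: "qpoch a q (Suc k) = qpoch a q k * (1 - q ^ k * a)"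
  unfolding qpoch_def by simp

lemma qpoch_Suc_left: "qpoch a q (Suc k) = (1 - a) * qpoch (q * a) q k"
  unfolding qpoch_def prod.atLeast0_lessThan_Suc_shift by (simp add: ac_simps)

text \<open>A polynomial identity between q-integers; it is the heart of the certificate identity
  below.  (For q = 1 both sides vanish, because [n] is then 0 by the convention x / 0 = 0.)\<close>
lemma qint_certificate_identity:
  fixes q :: "'a::field"
  shows "qint q (2*k + d + 1) * qint q (2 * (k + d + m)) =
           q ^ (2*k) * qint q (d + 1) * qint q d + qint q (2*k) * qint q (2 * (k + d + m))
           + q ^ (2*k + d) * qint q (2*m + 2*k + d) * qint q (d + 1)"
proof (cases "q = 1")
  case False
  define a e c where "a = q ^ k" and "e = q ^ d" and "c = q ^ m"
  have powers: "q ^ (2*k + d + 1) = a^2 * e * q" "q ^ (2 * (k + d + m)) = a^2 * e^2 * c^2"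
    "q ^ (2*k + d) = a^2 * e" "q ^ (2*m + 2*k + d) = c^2 * a^2 * e" "q ^ (d + 1) = e * q"
    "q ^ (2*k) = a^2"
    unfolding a_def e_def c_def by (simp_all add: power_add power_mult ac_simps power2_eq_square)
  show ?thesis
    unfolding qint_def powers e_def[symmetric] using False by (simp add: field_simps) algebra
qed (simp add: qint_def)

definition vsummand :: "'a::field \<Rightarrow> nat \<Rightarrow> nat \<Rightarrow> nat \<Rightarrow> 'a" where
  "vsummand q m n k =
     (- (1/q)) ^ k * q ^ (k^2) * (qfact q n / (qfact q k * qfact q (n - 2*k)))
     * (qfact q (m + n - k - 1) / qfact q (m + n - 1))
     * (1 / (qpoch (- q) q k * qpoch (- (q ^ (n + m - k))) q k))"

definition vterm :: "'a::field \<Rightarrow> nat \<Rightarrow> nat \<Rightarrow> nat \<Rightarrow> 'a" where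
  "vterm q m n k = (if 2*k \<le> n then vsummand q m n k else 0)"

definition vsum :: "'a::field \<Rightarrow> nat \<Rightarrow> nat \<Rightarrow> 'a" where
  "vsum q m n = (\<Sum>k\<le>n. vterm q m n k)"

definition vclosed :: "'a::field \<Rightarrow> nat \<Rightarrow> nat \<Rightarrow> 'a" where
  "vclosed q m n = q ^ (n choose 2) *
     ((\<Prod>j = 1..n - 1. qint q (2*m + j)) / (\<Prod>j = 1..n - 1. qint q (2*m + 2*j)))"

text \<open>For n \<ge> 1, v_n(1, m, 1/q, q) is S(n); padding the range 0..n/2 by zero terms
  gives a summation range that does not depend on the parity of n.\<close>
lemma vpoly_eq_vsum:
  assumes "n \<ge> 1"
  shows "vpoly n 1 m (1/q) q = vsum q m n"
proof -
  have "vpoly n 1 m (1/q) q = (\<Sum>k = 0..n div 2. vsummand q m n k)"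
    using assms unfolding vpoly_def vsummand_def by simp
  also have "\<dots> = (\<Sum>k = 0..n div 2. vterm q m n k)"
    by (intro sum.cong) (auto simp: vterm_def)
  also have "\<dots> = vsum q m n"
    unfolding vsum_def atMost_atLeast0 by (rule sum.mono_neutral_left) (auto simp: vterm_def)
  finally show ?thesis .
qed

definition vratio :: "'a::field \<Rightarrow> nat \<Rightarrow> nat \<Rightarrow> 'a" where
  "vratio q m n = q ^ n * qint q (2*m + n) / qint q (2*m + 2*n)"

definition wz_cert :: "'a::field \<Rightarrow> nat \<Rightarrow> nat \<Rightarrow> nat \<Rightarrow> 'a" where
  "wz_cert q m n k = - qint q (2*k) / qint q (Suc n) * vterm q m (Suc n) k"

lemma vclosed_Suc:
  assumes "n \<ge> 1"
  shows "vclosed q m (Suc n) = vratio q m n * vclosed q m n"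
proof -
  obtain n' where n: "n = Suc n'" using assms by (cases n) auto
  have "Suc n choose 2 = (n choose 2) + n"
    by (simp add: n numeral_2_eq_2)
  then show ?thesis
    unfolding vclosed_def vratio_def n by (simp add: prod.nat_ivl_Suc' power_add ac_simps)
qed

lemma vclosed_1: "vclosed q m 1 = 1"
  unfolding vclosed_def by (simp add: binomial_eq_0)

text \<open>An element of a field that is nonzero and not a root of unity.  This is what makes
  all q-integers [j] (j \<ge> 1) and all factors 1 + q^j nonzero.\<close>
locale generic_q =
  fixes q :: "'a::field"
  assumes nonzero: "q \<noteq> 0"
    and not_root_of_unity: "j \<ge> 1 \<Longrightarrow> q ^ j \<noteq> 1"
begin

lemma one_plus_power_nonzero: "j \<ge> 1 \<Longrightarrow> 1 + q ^ j \<noteq> 0"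
proof
  assume "j \<ge> 1" "1 + q ^ j = 0"
  then have "q ^ j = -1" by (simp add: add_eq_0_iff)
  then have "q ^ (j*2) = 1" by (simp add: power_mult)
  with not_root_of_unity[of "j*2"] \<open>j \<ge> 1\<close> show False by simp
qed

lemma qint_nonzero: "j \<ge> 1 \<Longrightarrow> qint q j \<noteq> 0"
  unfolding qint_def using not_root_of_unity[of j] not_root_of_unity[of 1] by auto

lemma qfact_nonzero [simp]: "qfact q n \<noteq> 0"
  unfolding qfact_def using qint_nonzero by (auto simp: prod_zero_iff)

lemma qpoch_nonzero: "j \<ge> 1 \<Longrightarrow> qpoch (- (q ^ j)) q k \<noteq> 0"
  unfolding qpoch_def using one_plus_power_nonzero[of "_ + j"]
  by (auto simp: prod_zero_iff power_add mult.commute)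

lemma qpoch_minus_q_nonzero [simp]: "qpoch (- q) q k \<noteq> 0"
  using qpoch_nonzero[of 1] by simp

lemma vsummand_Suc_k:
  "vsummand q m (2*k + 2 + e) (Suc k) = vsummand q m (2*k + 2 + e) k *
     (- (q ^ (2*k)) * qint q (e + 2) * qint q (e + 1) / (qint q (2*k + 2) * qint q (2 * (k + e + m + 1))))"
proof -
  define u w where "u = 1 + q ^ Suc k" and "w = 1 + q ^ Suc (m + k + e)"
  have idx: "2*k + 2 + e - 2 * Suc k = e" "2*k + 2 + e - 2*k = Suc (Suc e)"
    "m + (2*k + 2 + e) - Suc k - 1 = m + k + e" "m + (2*k + 2 + e) - k - 1 = Suc (m + k + e)"
    "2*k + 2 + e + m - Suc k = Suc (m + k + e)" "2*k + 2 + e + m - k = m + k + e + 2"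
    by simp_all
  have "(Suc k)^2 = k^2 + 2*k + 1" by (simp add: power2_eq_square)
  then have sign: "(- (1/q)) ^ Suc k * q ^ (Suc k)^2 = (- (1/q)) ^ k * q ^ (k^2) * (- (q ^ (2*k)))"
    using nonzero by (simp add: power_add field_simps)
  have poch: "qpoch (- (q ^ Suc (m + k + e))) q (Suc k) = w * qpoch (- (q ^ (m + k + e + 2))) q k"
    "qpoch (- q) q (Suc k) = qpoch (- q) q k * u"
    unfolding u_def w_def by (simp add: qpoch_Suc_left, simp add: qpoch_Suc)
  have doubles: "qint q (2*k + 2) = qint q (Suc k) * u"
    "qint q (2 * (k + e + m + 1)) = qint q (Suc (m + k + e)) * w"
    unfolding u_def w_def using qint_double[of q "Suc k"] qint_double[of q "Suc (m + k + e)"]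
    by (simp_all add: ac_simps)
  have nonzeros: "qpoch (- (q ^ (m + k + e + 2))) q k \<noteq> 0" "u \<noteq> 0" "w \<noteq> 0"
    "qint q (Suc k) \<noteq> 0" "qint q (Suc e) \<noteq> 0" "qint q (Suc (Suc e)) \<noteq> 0"
    "qint q (Suc (m + k + e)) \<noteq> 0"
    unfolding u_def w_def by (rule qpoch_nonzero one_plus_power_nonzero qint_nonzero; simp)+
  show ?thesis
    unfolding vsummand_def idx sign poch doubles qfact_Suc
    using nonzeros nonzero by (simp add: field_simps)
qed

lemma vsummand_Suc_n:
  assumes "m + k + d \<ge> 1"
  shows "vsummand q m (2*k + d + 1) k * qint q (d + 1) * qint q (2 * (2*k + d + m)) =
         vsummand q m (2*k + d) k * qint q (2*k + d + 1) * qint q (2 * (k + d + m))"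
proof -
  obtain j where j: "m + k + d = Suc j" using assms by (cases "m + k + d") auto
  define v w where "v = 1 + q ^ Suc (j + k)" and "w = 1 + q ^ Suc j"
  have idx: "2*k + d + 1 - 2*k = Suc d" "2*k + d - 2*k = d" "m + (2*k + d + 1) - k - 1 = Suc j"
    "m + (2*k + d + 1) - 1 = Suc (j + k)" "m + (2*k + d) - k - 1 = j" "m + (2*k + d) - 1 = j + k"
    "2*k + d + 1 + m - k = Suc (Suc j)" "2*k + d + m - k = Suc j"
    using j by simp_all
  have fact_n: "qfact q (2*k + d + 1) = qfact q (2*k + d) * qint q (2*k + d + 1)"
    using qfact_Suc[of q "2*k + d"] by simp
  have nonzeros: "qpoch (- (q ^ Suc (Suc j))) q k \<noteq> 0" "v \<noteq> 0" "w \<noteq> 0"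
    "qint q (Suc d) \<noteq> 0" "qint q (Suc j) \<noteq> 0" "qint q (Suc (j + k)) \<noteq> 0"
    "qint q (2*k + d + 1) \<noteq> 0"
    unfolding v_def w_def by (rule qpoch_nonzero one_plus_power_nonzero qint_nonzero; simp)+
  have "qpoch (- (q ^ Suc j)) q k * v = w * qpoch (- (q ^ Suc (Suc j))) q k"
    using qpoch_Suc[of "- (q ^ Suc j)" q k] qpoch_Suc_left[of "- (q ^ Suc j)" q k]
    unfolding v_def w_def by (simp add: power_add ac_simps)
  then have poch: "qpoch (- (q ^ Suc j)) q k = w * qpoch (- (q ^ Suc (Suc j))) q k / v"
    using nonzeros by (simp add: field_simps)
  have j_double: "2 * (2*k + d + m) = 2 * Suc (j + k)" "2 * (k + d + m) = 2 * Suc j"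
    using j by simp_all
  have doubles: "qint q (2 * (2*k + d + m)) = qint q (Suc (j + k)) * v"
    "qint q (2 * (k + d + m)) = qint q (Suc j) * w"
    unfolding j_double v_def w_def by (rule qint_double)+
  show ?thesis
    unfolding vsummand_def idx fact_n poch doubles qfact_Suc
    using nonzeros nonzero by (simp add: field_simps)
qed

text \<open>Outside the
  range 2k \<le> n it is immediate; inside, both sides are multiples of T(n+1,k) by the two ratio
  lemmas, and the multipliers agree by the q-integer identity above.\<close>
lemma wz_certificate:
  assumes "n \<ge> 1"
  shows "vterm q m (Suc n) k - vratio q m n * vterm q m n k = wz_cert q m n (Suc k) - wz_cert q m n k"
proof (cases "2*k \<le> n")
  case False
  then consider "2*k = Suc n" | "2*k > Suc n" by linarith
  then show ?thesis
    by cases (simp_all add: vterm_def wz_cert_def qint_nonzero)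
next
  case True
  then obtain d where n: "n = 2*k + d" using le_Suc_ex by blast
  define x where "x = vsummand q m (Suc n) k"
  define B C where "B = qint q (Suc n)" and "C = qint q (2 * (k + d + m))"
  have nonzeros: "B \<noteq> 0" "C \<noteq> 0" "qint q (2*k + 2) \<noteq> 0" "qint q (2 * (2*k + d + m)) \<noteq> 0"
    using assms unfolding B_def C_def n by (auto intro!: qint_nonzero)
  have at_Suc_n: "vterm q m (Suc n) k = x"
    unfolding vterm_def x_def n by simp
  have at_n: "vterm q m n k = x * qint q (d + 1) * qint q (2 * (2*k + d + m)) / (B * C)"
    using vsummand_Suc_n[of m k d] assms nonzeros
    unfolding vterm_def x_def B_def C_def n by (simp add: field_simps)
  have at_Suc_n_Suc_k:
    "vterm q m (Suc n) (Suc k) = - x * q ^ (2*k) * qint q (d + 1) * qint q d / (qint q (2*k + 2) * C)"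
  proof (cases d)
    case (Suc e)
    then have "Suc n = 2*k + 2 + e" using n by simp
    then show ?thesis
      using vsummand_Suc_k[of m k e] unfolding vterm_def x_def C_def Suc by (simp add: ac_simps)
  qed (simp add: vterm_def n)
  have ratio: "vratio q m n = q ^ n * qint q (2*m + n) / qint q (2 * (2*k + d + m))"
    unfolding vratio_def n by (simp add: ac_simps)
  have identity: "B * C - q ^ n * qint q (2*m + n) * qint q (d + 1) =
      q ^ (2*k) * qint q (d + 1) * qint q d + qint q (2*k) * C"
    using qint_certificate_identity[of q k d m] unfolding B_def C_def n by (simp add: ac_simps)
  have "vterm q m (Suc n) k - vratio q m n * vterm q m n k =
      x * (B * C - q ^ n * qint q (2*m + n) * qint q (d + 1)) / (B * C)"
    unfolding at_Suc_n at_n ratio using nonzeros by (simp add: field_simps)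
  also have "\<dots> = x * (q ^ (2*k) * qint q (d + 1) * qint q d + qint q (2*k) * C) / (B * C)"
    unfolding identity ..
  also have "\<dots> = wz_cert q m n (Suc k) - wz_cert q m n k"
    unfolding wz_cert_def at_Suc_n at_Suc_n_Suc_k B_def[symmetric] using nonzeros
    by (simp add: field_simps)
  finally show ?thesis .
qed

text \<open>Summing the certificate identity over k telescopes: S(n+1) = rho_n S(n).\<close>
lemma vsum_Suc:
  assumes "n \<ge> 1"
  shows "vsum q m (Suc n) = vratio q m n * vsum q m n"
proof -
  have "(\<Sum>k\<le>Suc n. vterm q m (Suc n) k - vratio q m n * vterm q m n k) =
      (\<Sum>k<Suc (Suc n). wz_cert q m n (Suc k) - wz_cert q m n k)"
    using wz_certificate[OF assms] by (simp add: lessThan_Suc_atMost)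
  also have "\<dots> = wz_cert q m n (Suc (Suc n)) - wz_cert q m n 0"
    by (rule sum_lessThan_telescope)
  also have "\<dots> = 0"
    by (simp add: wz_cert_def vterm_def)
  finally have telescoped:
    "(\<Sum>k\<le>Suc n. vterm q m (Suc n) k) - vratio q m n * (\<Sum>k\<le>Suc n. vterm q m n k) = 0"
    by (simp only: sum_subtractf sum_distrib_left)
  have "vterm q m n (Suc n) = 0"
    by (simp add: vterm_def)
  with telescoped show ?thesis
    unfolding vsum_def by simp
qed

lemma vsum_eq_vclosed:
  assumes "n \<ge> 1"
  shows "vsum q m n = vclosed q m n"
  using assms
proof (induction n rule: dec_induct)
  case base
  show ?case
    using vclosed_1[of q m] by (simp add: vsum_def vterm_def vsummand_def qpoch_def)
next
  case (step k)
  have "vsum q m (Suc k) = vratio q m k * vsum q m k"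
    by (rule vsum_Suc[OF step(1)])
  also have "\<dots> = vratio q m k * vclosed q m k"
    by (simp only: step(3))
  also have "\<dots> = vclosed q m (Suc k)"
    by (rule vclosed_Suc[OF step(1), symmetric])
  finally show ?case .
qed

end

text \<open>The indeterminate of Q(q) is nonzero and no power q^j with j \<ge> 1 equals 1,
  since q^j is a polynomial of degree j.\<close>
lemma qvar_power: "qvar ^ j = Fract ([:0, 1:] ^ j) 1"
  by (induction j) (simp_all add: qvar_def One_fract_def)

lemma generic_q_qvar: "generic_q qvar"
proof
  show "qvar \<noteq> 0"
    unfolding qvar_def Zero_fract_def by (simp add: eq_fract)
next
  fix j :: nat
  assume "j \<ge> 1"
  show "qvar ^ j \<noteq> 1"
  proof
    assume "qvar ^ j = 1"
    then have "[:0, 1::rat:] ^ j = 1"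
      unfolding qvar_power One_fract_def by (simp add: eq_fract)
    then have "degree ([:0, 1::rat:] ^ j) = 0" by simp
    with \<open>j \<ge> 1\<close> show False by (simp add: degree_power_eq)
  qed
qed

theorem mainTheorem18:
  fixes m n :: nat
  assumes "n \<ge> 1"
  shows "vpoly n 1 m (1 / qvar) qvar =
           qvar ^ (n choose 2) *
           ((\<Prod>j = 1..n - 1. qint qvar (2 * m + j)) /
            (\<Prod>j = 1..n - 1. qint qvar (2 * m + 2 * j)))"
proof -
  interpret generic_q qvar by (rule generic_q_qvar)
  have "vpoly n 1 m (1 / qvar) qvar = vsum qvar m n"
    by (rule vpoly_eq_vsum[OF assms])
  also have "\<dots> = vclosed qvar m n"
    by (rule vsum_eq_vclosed[OF assms])
  finally show ?thesis
    unfolding vclosed_def .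
qed

end
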